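(* Let $G$ be a group generated by a finite conjugacy class $X$, let $m$ be the order of the conjugation action of any $x\in X$ on $X$, let $<$ be a total order on $X$, and let $z$ be the maximal element of $(X,<)$. Then for all $n\ge 0$, every element of $X^n=\{y_1y_2\cdots y_n: y_i\in X\}\subseteq G$ can be written as $x_1^{n_1}x_2^{n_2}\cdots x_k^{n_k}z^l$ with $k,l\ge0$, $n_1+\cdots+n_k+l=n$, $x_1<x_2<\cdots<x_k<z$ in $X$, and $1\le n_i\le m-1$ for all $1\le i\le k$.
   Context: The conjugation action of $x\in X$ on $X$ is the permutation $y\mapsto xyx^{-1}$ of $X$; its order $m$ is the same for all $x\in X$ since $X$ is a conjugacy class. *)

theory Defs
  imports "HOL-Algebra.Algebra"
begin

definition mprod :: "('a, 'b) monoid_scheme \<Rightarrow> 'a list \<Rightarrow> 'a" where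
  "mprod G ys = foldr (\<lambda>a b. a \<otimes>\<^bsub>G\<^esub> b) ys \<one>\<^bsub>G\<^esub>"

definition is_conj_class :: "('a, 'b) monoid_scheme \<Rightarrow> 'a set \<Rightarrow> bool" where
  "is_conj_class G C \<longleftrightarrow> (\<exists>g\<in>carrier G.
      C = {h \<otimes>\<^bsub>G\<^esub> g \<otimes>\<^bsub>G\<^esub> m_inv G h | h. h \<in> carrier G})"

definition conj_action_order :: "('a, 'b) monoid_scheme \<Rightarrow> 'a set \<Rightarrow> 'a \<Rightarrow> nat" where
  "conj_action_order G C x = (LEAST m. 0 < m \<and>
      (\<forall>y\<in>C. ((\<lambda>y. x \<otimes>\<^bsub>G\<^esub> y \<otimes>\<^bsub>G\<^esub> m_inv G x) ^^ m) y = y))"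

end

theory Submission
  imports Defs
begin

text \<open>
  Conjugation by x0 permutes the finite set X, so m is positive and x0^m centralises X, hence
  the group generated by X; as every x \<in> X is conjugate to x0, also x^m = x0^m = z^m.
  A word in X is sorted by the rewriting a b = b (b\<inverse> a b), which keeps all letters in X and
  makes the word lexicographically smaller, so it terminates. In the sorted word equal letters are
  adjacent and are collected into powers; whenever an exponent reaches m the block equals the
  central element z^m and is moved into the final power of z.
\<close>

context monoid
begin

lemma mprod_Nil [simp]: "mprod G [] = \<one>"
  by (simp add: mprod_def)

lemma mprod_Cons [simp]: "mprod G (a # L) = a \<otimes> mprod G L"
  by (simp add: mprod_def)

lemma mprod_closed [simp]: "set L \<subseteq> carrier G \<Longrightarrow> mprod G L \<in> carrier G"
  by (induction L) auto

lemma mprod_append: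
  "set L1 \<subseteq> carrier G \<Longrightarrow> set L2 \<subseteq> carrier G \<Longrightarrow> mprod G (L1 @ L2) = mprod G L1 \<otimes> mprod G L2"
  by (induction L1) (auto simp: m_assoc)

end

lemma wf_lex_strict_order:
  assumes "finite C" "partial_order_on C R"
  shows "wf (lex (R - Id))"
proof -
  have "R \<subseteq> C \<times> C" "trans R" "antisym R"
    using assms(2) by (auto simp: partial_order_on_def preorder_on_def refl_on_def)
  then have "finite (R - Id)" "trans (R - Id)"
    using assms(1) finite_subset[of "R - Id" "C \<times> C"] by (auto simp: trans_def antisym_def)
  then show ?thesis
    by (simp add: acyclic_def finite_acyclic_wf wf_lex)
qed

context group
begin

lemma inv_mult_cancel [simp]: "x \<in> carrier G \<Longrightarrow> y \<in> carrier G \<Longrightarrow> inv x \<otimes> (x \<otimes> y) = y"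
  by (simp flip: m_assoc)

lemma mult_inv_cancel [simp]: "x \<in> carrier G \<Longrightarrow> y \<in> carrier G \<Longrightarrow> x \<otimes> (inv x \<otimes> y) = y"
  by (simp flip: m_assoc)

lemma conj_nat_pow:
  "k \<in> carrier G \<Longrightarrow> a \<in> carrier G \<Longrightarrow> (k \<otimes> a \<otimes> inv k) [^] (n::nat) = k \<otimes> a [^] n \<otimes> inv k"
  by (induction n) (simp_all add: m_assoc)

lemma funpow_conj:
  assumes "x \<in> carrier G" "y \<in> carrier G"
  shows "((\<lambda>y. x \<otimes> y \<otimes> inv x) ^^ k) y = x [^] k \<otimes> y \<otimes> inv (x [^] k)"
proof (induction k)
  case (Suc k)
  have "x [^] Suc k = x \<otimes> x [^] k" using assms(1) by (rule nat_pow_Suc2)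
  then show ?case using Suc assms by (simp add: m_assoc inv_mult_group)
qed (simp add: assms)

lemma conj_cancel:
  assumes "a \<in> carrier G" "u \<in> carrier G" "v \<in> carrier G" "a \<otimes> u \<otimes> inv a = a \<otimes> v \<otimes> inv a"
  shows "u = v"
proof -
  have "inv a \<otimes> (a \<otimes> u \<otimes> inv a) \<otimes> a = inv a \<otimes> (a \<otimes> v \<otimes> inv a) \<otimes> a"
    using assms(4) by simp
  then show ?thesis using assms(1-3) by (simp add: m_assoc)
qed

lemma commute_generate:
  assumes c: "c \<in> carrier G" and H: "H \<subseteq> carrier G" and comm: "\<And>h. h \<in> H \<Longrightarrow> c \<otimes> h = h \<otimes> c"
    and g: "g \<in> generate G H"
  shows "c \<otimes> g = g \<otimes> c"
  using g
proof (induction g rule: generate.induct)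
  case (inv h)
  then have "h \<in> carrier G" "c \<otimes> h = h \<otimes> c" using H comm by auto
  then have "c \<otimes> inv h = inv h \<otimes> (h \<otimes> c) \<otimes> inv h" using c by (simp add: m_assoc)
  also have "\<dots> = inv h \<otimes> c" using \<open>c \<otimes> h = h \<otimes> c\<close> \<open>h \<in> carrier G\<close> c
    by (simp flip: \<open>c \<otimes> h = h \<otimes> c\<close> add: m_assoc)
  finally show ?case .
next
  case (eng h1 h2)
  then have "h1 \<in> carrier G" "h2 \<in> carrier G" using H generate_in_carrier by auto
  then show ?case using eng c by (metis m_assoc)
qed (use c comm in auto)

lemma conj_period_exists:
  assumes C: "finite C" "C \<subseteq> carrier G" and x: "x \<in> carrier G"
    and closed: "\<And>y. y \<in> C \<Longrightarrow> x \<otimes> y \<otimes> inv x \<in> C"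
  shows "\<exists>d::nat>0. \<forall>y\<in>C. x [^] d \<otimes> y \<otimes> inv (x [^] d) = y"
proof -
  define conj_by where "conj_by k = restrict (\<lambda>y. x [^] k \<otimes> y \<otimes> inv (x [^] k)) C" for k :: nat
  have "((\<lambda>y. x \<otimes> y \<otimes> inv x) ^^ k) y \<in> C" if "y \<in> C" for k y
    using that closed by (induction k) auto
  then have "range conj_by \<subseteq> C \<rightarrow>\<^sub>E C"
    using C(2) x by (auto simp: conj_by_def funpow_conj subset_iff)
  then have "finite (range conj_by)"
    by (rule finite_subset) (simp add: C(1) finite_PiE)
  then have "\<not> inj conj_by"
    using finite_imageD infinite_UNIV_nat by blast
  then obtain i j where ij: "i < j" "conj_by i = conj_by j"
    unfolding inj_def by (metis linorder_neqE_nat)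
  have "x [^] (j - i) \<otimes> y \<otimes> inv (x [^] (j - i)) = y" if y: "y \<in> C" for y
  proof (rule conj_cancel)
    have yG: "y \<in> carrier G" using y C(2) by blast
    have split: "x [^] j = x [^] i \<otimes> x [^] (j - i)"
      using ij(1) x by (simp add: nat_pow_mult)
    have "x [^] i \<otimes> (x [^] (j - i) \<otimes> y \<otimes> inv (x [^] (j - i))) \<otimes> inv (x [^] i)
        = x [^] j \<otimes> y \<otimes> inv (x [^] j)"
      unfolding split using x yG by (simp add: m_assoc inv_mult_group)
    also have "\<dots> = x [^] i \<otimes> y \<otimes> inv (x [^] i)"
      using fun_cong[OF ij(2), of y] y by (simp add: conj_by_def)
    finally show "x [^] i \<otimes> (x [^] (j - i) \<otimes> y \<otimes> inv (x [^] (j - i))) \<otimes> inv (x [^] i)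
        = x [^] i \<otimes> y \<otimes> inv (x [^] i)" .
  qed (use x y C(2) in auto)
  with ij(1) show ?thesis
    by (intro exI[of _ "j - i"]) auto
qed

lemma conj_action_order_period:
  assumes "finite C" "C \<subseteq> carrier G" "x \<in> carrier G" "\<And>y. y \<in> C \<Longrightarrow> x \<otimes> y \<otimes> inv x \<in> C"
  defines "m \<equiv> conj_action_order G C x"
  shows "0 < m" and "\<And>y. y \<in> C \<Longrightarrow> x [^] m \<otimes> y \<otimes> inv (x [^] m) = y"
proof -
  have iterate: "((\<lambda>y. x \<otimes> y \<otimes> inv x) ^^ k) y = x [^] k \<otimes> y \<otimes> inv (x [^] k)" if "y \<in> C" for k y
    using that assms(2,3) by (auto intro: funpow_conj)
  obtain d :: nat where "0 < d \<and> (\<forall>y\<in>C. ((\<lambda>y. x \<otimes> y \<otimes> inv x) ^^ d) y = y)"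
    using conj_period_exists[OF assms(1-4)] iterate by auto
  then have "0 < m \<and> (\<forall>y\<in>C. ((\<lambda>y. x \<otimes> y \<otimes> inv x) ^^ m) y = y)"
    unfolding m_def conj_action_order_def by (rule LeastI)
  then show "0 < m" and "\<And>y. y \<in> C \<Longrightarrow> x [^] m \<otimes> y \<otimes> inv (x [^] m) = y"
    using iterate by auto
qed

lemma conj_class_conj_closed:
  assumes "is_conj_class G C" "a \<in> C" "k \<in> carrier G"
  shows "k \<otimes> a \<otimes> inv k \<in> C"
proof -
  obtain g where g: "g \<in> carrier G" and C: "C = {h \<otimes> g \<otimes> inv h | h. h \<in> carrier G}"
    using assms(1) unfolding is_conj_class_def by blast
  obtain h where h: "h \<in> carrier G" "a = h \<otimes> g \<otimes> inv h"
    using assms(2) C by blast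
  have "k \<otimes> a \<otimes> inv k = (k \<otimes> h) \<otimes> g \<otimes> inv (k \<otimes> h)"
    using h assms(3) g by (simp add: m_assoc inv_mult_group)
  then show ?thesis using C h assms(3) by blast
qed

lemma conj_class_conjugate:
  assumes "is_conj_class G C" "a \<in> C" "b \<in> C"
  obtains k where "k \<in> carrier G" "b = k \<otimes> a \<otimes> inv k"
proof -
  obtain g where g: "g \<in> carrier G" and C: "C = {h \<otimes> g \<otimes> inv h | h. h \<in> carrier G}"
    using assms(1) unfolding is_conj_class_def by blast
  obtain h1 h2 where h: "h1 \<in> carrier G" "a = h1 \<otimes> g \<otimes> inv h1" "h2 \<in> carrier G" "b = h2 \<otimes> g \<otimes> inv h2"
    using assms(2,3) C by blast
  then have "b = (h2 \<otimes> inv h1) \<otimes> a \<otimes> inv (h2 \<otimes> inv h1)"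
    using g by (simp add: m_assoc inv_mult_group)
  with h show thesis by (intro that[of "h2 \<otimes> inv h1"]) auto
qed

lemma conj_class_pow_central:
  assumes C: "is_conj_class G C" "finite C" "C \<subseteq> carrier G" "generate G C = carrier G"
    and x0: "x0 \<in> C"
  defines "m \<equiv> conj_action_order G C x0"
  shows "0 < m"
    and central: "\<And>g. g \<in> carrier G \<Longrightarrow> x0 [^] m \<otimes> g = g \<otimes> x0 [^] m"
    and "\<And>x. x \<in> C \<Longrightarrow> x [^] m = x0 [^] m"
proof -
  have x0G: "x0 \<in> carrier G" using x0 C(3) by blast
  have closed: "x0 \<otimes> y \<otimes> inv x0 \<in> C" if "y \<in> C" for y
    using conj_class_conj_closed[OF C(1) that x0G] .
  show "0 < m"
    unfolding m_def using conj_action_order_period(1)[OF C(2,3) x0G closed] .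
  have acts_trivially: "x0 [^] m \<otimes> y \<otimes> inv (x0 [^] m) = y" if "y \<in> C" for y
    unfolding m_def using conj_action_order_period(2)[OF C(2,3) x0G closed that] .
  have "x0 [^] m \<otimes> y = y \<otimes> x0 [^] m" if y: "y \<in> C" for y
  proof -
    have "x0 [^] m \<otimes> y = (x0 [^] m \<otimes> y \<otimes> inv (x0 [^] m)) \<otimes> x0 [^] m"
      using x0G y C(3) by (auto simp: m_assoc)
    then show ?thesis using acts_trivially[OF y] by simp
  qed
  then show central: "\<And>g. g \<in> carrier G \<Longrightarrow> x0 [^] m \<otimes> g = g \<otimes> x0 [^] m"
    using commute_generate[of "x0 [^] m" C] x0G C(3,4) by auto
  fix x assume "x \<in> C"
  then obtain k where k: "k \<in> carrier G" "x = k \<otimes> x0 \<otimes> inv k"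
    using conj_class_conjugate[OF C(1) x0] by blast
  then have "x [^] m = k \<otimes> x0 [^] m \<otimes> inv k"
    using x0G by (simp add: conj_nat_pow)
  also have "\<dots> = x0 [^] m"
    using k(1) x0G by (simp flip: central[OF k(1)] add: m_assoc)
  finally show "x [^] m = x0 [^] m" .
qed

lemma mprod_swap_conj:
  assumes "set xs \<subseteq> carrier G" "set zs \<subseteq> carrier G" "a \<in> carrier G" "b \<in> carrier G"
  shows "mprod G (xs @ b # (inv b \<otimes> a \<otimes> b) # zs) = mprod G (xs @ a # b # zs)"
  using assms by (simp add: mprod_append m_assoc)

lemma exists_sorted_word:
  assumes C: "finite C" "C \<subseteq> carrier G" and R: "linear_order_on C R"
    and closed: "\<And>a b. a \<in> C \<Longrightarrow> b \<in> C \<Longrightarrow> inv b \<otimes> a \<otimes> b \<in> C"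
  shows "set ys \<subseteq> C \<Longrightarrow> \<exists>ys'. set ys' \<subseteq> C \<and> length ys' = length ys
    \<and> sorted_wrt (\<lambda>a b. (a, b) \<in> R) ys' \<and> mprod G ys' = mprod G ys"
proof -
  have wf: "wf (lex (R - Id))"
    using wf_lex_strict_order[OF C(1)] R by (simp add: linear_order_on_def)
  have trans: "transp (\<lambda>a b. (a, b) \<in> R)" and total: "total_on C R" and refl: "refl_on C R"
    using R by (auto simp: linear_order_on_def partial_order_on_def preorder_on_def trans_def transp_def)
  show "set ys \<subseteq> C \<Longrightarrow> ?thesis"
  proof (induction ys rule: wf_induct[OF wf])
    case (1 ys)
    show ?case
    proof (cases "sorted_wrt (\<lambda>a b. (a, b) \<in> R) ys")
      case False
      then obtain i where i: "Suc i < length ys" "(ys ! i, ys ! Suc i) \<notin> R"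
        using sorted_wrt_iff_nth_Suc_transp[OF trans] by blast
      define xs a b zs where "xs = take i ys" "a = ys ! i" "b = ys ! Suc i" "zs = drop (Suc (Suc i)) ys"
      have ys: "ys = xs @ a # b # zs"
        using i(1) unfolding xs_a_b_zs_def by (metis Cons_nth_drop_Suc Suc_lessD append_take_drop_id)
      have in_C: "a \<in> C" "b \<in> C" "set xs \<subseteq> C" "set zs \<subseteq> C"
        using "1.prems" ys by auto
      moreover have "(a, b) \<notin> R"
        using i(2) by (simp add: xs_a_b_zs_def)
      ultimately have "(b, a) \<in> R - Id"
        using total refl by (cases "a = b") (auto simp: total_on_def refl_on_def)
      define swapped where "swapped = xs @ b # (inv b \<otimes> a \<otimes> b) # zs"
      have "(swapped, ys) \<in> lex (R - Id)"
        unfolding swapped_def ys lex_conv using \<open>(b, a) \<in> R - Id\<close> by auto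
      moreover have "set swapped \<subseteq> C"
        using in_C closed by (auto simp: swapped_def)
      ultimately obtain ys' where "set ys' \<subseteq> C" "length ys' = length swapped"
          "sorted_wrt (\<lambda>a b. (a, b) \<in> R) ys'" "mprod G ys' = mprod G swapped"
        using "1.IH" by blast
      moreover have "mprod G swapped = mprod G ys" "length swapped = length ys"
        unfolding swapped_def ys using in_C C(2) by (auto intro: mprod_swap_conj)
      ultimately show ?thesis by auto
    qed (use "1.prems" in blast)
  qed
qed

end

locale central_top_power = group G for G (structure) +
  fixes C :: "'a set" and R :: "'a rel" and z :: 'a and m :: nat
  assumes C_carrier: "C \<subseteq> carrier G"
    and antisym_R: "antisym R"
    and z_in_C: "z \<in> C" and below_z: "\<And>x. x \<in> C \<Longrightarrow> (x, z) \<in> R"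
    and m_pos: "0 < m"
    and pow_m_eq: "\<And>x. x \<in> C \<Longrightarrow> x [^] m = z [^] m"
    and pow_m_central: "\<And>g. g \<in> carrier G \<Longrightarrow> z [^] m \<otimes> g = g \<otimes> z [^] m"
begin

definition ordered_power_form :: "'a \<Rightarrow> nat \<Rightarrow> 'a list \<Rightarrow> nat list \<Rightarrow> nat \<Rightarrow> bool" where
  "ordered_power_form w n xs ns l \<longleftrightarrow> length ns = length xs \<and> set xs \<subseteq> C
    \<and> sorted_wrt (\<lambda>a b. (a, b) \<in> R \<and> a \<noteq> b) xs
    \<and> (\<forall>x\<in>set xs. (x, z) \<in> R \<and> x \<noteq> z)
    \<and> (\<forall>k\<in>set ns. 1 \<le> k \<and> k \<le> m - 1)
    \<and> sum_list ns + l = n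
    \<and> w = mprod G (map2 (\<lambda>x k. x [^] k) xs ns @ [z [^] l])"

lemma z_carrier: "z \<in> carrier G"
  using z_in_C C_carrier by blast

lemma powers_carrier: "set xs \<subseteq> C \<Longrightarrow> set (map2 (\<lambda>x k. x [^] k) xs (ns :: nat list)) \<subseteq> carrier G"
  using C_carrier by (auto dest!: set_zip_leftD simp: subset_iff)

lemma two_le_m: "x \<in> C \<Longrightarrow> x \<noteq> z \<Longrightarrow> 2 \<le> m"
  using m_pos pow_m_eq[of x] C_carrier z_carrier by (cases "m = 1") auto

lemma ordered_power_form_Nil: "ordered_power_form \<one> 0 [] [] 0"
  by (simp add: ordered_power_form_def)

lemma ordered_power_form_Cons_top:
  assumes "ordered_power_form w n xs ns l" "\<forall>x\<in>set xs. (z, x) \<in> R"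
  shows "ordered_power_form (z \<otimes> w) (Suc n) [] [] (Suc l)"
proof -
  have "xs = []"
    using assms antisym_R unfolding ordered_power_form_def antisym_def by (cases xs) auto
  then show ?thesis
    using assms(1) nat_pow_Suc2[OF z_carrier, of l] z_carrier by (auto simp: ordered_power_form_def)
qed

lemma ordered_power_form_Cons_new:
  assumes "ordered_power_form w n xs ns l" "a \<in> C" "a \<noteq> z" "\<forall>x\<in>set xs. (a, x) \<in> R \<and> a \<noteq> x"
  shows "ordered_power_form (a \<otimes> w) (Suc n) (a # xs) (1 # ns) l"
  using assms two_le_m[OF assms(2,3)] below_z C_carrier by (auto simp: ordered_power_form_def)

lemma ordered_power_form_Cons_head:
  assumes "ordered_power_form w n (a # xs) (k # ns) l" "Suc k < m"
  shows "ordered_power_form (a \<otimes> w) (Suc n) (a # xs) (Suc k # ns) l"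
proof -
  have "a \<in> carrier G" "set xs \<subseteq> C"
    using assms(1) C_carrier by (auto simp: ordered_power_form_def)
  then show ?thesis
    using assms nat_pow_Suc2[of a k] powers_carrier z_carrier
    by (auto simp: ordered_power_form_def m_assoc)
qed

lemma ordered_power_form_Cons_wrap:
  assumes form: "ordered_power_form w n (a # xs) (k # ns) l" and k: "Suc k = m"
  shows "ordered_power_form (a \<otimes> w) (Suc n) xs ns (l + m)"
proof -
  define P where "P = mprod G (map2 (\<lambda>x k. x [^] k) xs ns)"
  have a: "a \<in> C" "a \<in> carrier G" and xs: "set xs \<subseteq> C"
    using form C_carrier by (auto simp: ordered_power_form_def)
  have P: "P \<in> carrier G"
    using mprod_closed[OF powers_carrier[OF xs]] by (simp add: P_def)
  have w: "w = a [^] k \<otimes> (P \<otimes> z [^] l)"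
    using form xs powers_carrier z_carrier by (simp add: ordered_power_form_def mprod_append P_def)
  have "a \<otimes> a [^] k = z [^] m"
    using nat_pow_Suc2[OF a(2), of k] pow_m_eq[OF a(1)] k by simp
  then have "a \<otimes> w = z [^] m \<otimes> (P \<otimes> z [^] l)"
    using a P z_carrier by (simp add: w flip: m_assoc)
  also have "\<dots> = P \<otimes> (z [^] m \<otimes> z [^] l)"
    using P z_carrier pow_m_central[OF P] by (simp flip: m_assoc)
  also have "\<dots> = P \<otimes> z [^] (l + m)"
    using z_carrier by (simp add: nat_pow_mult add.commute)
  finally show ?thesis
    using form k xs powers_carrier z_carrier
    by (auto simp: ordered_power_form_def mprod_append P_def)
qed

lemma ordered_power_form_Cons:
  assumes form: "ordered_power_form w n xs ns l" and a: "a \<in> C" and below: "\<forall>x\<in>set xs. (a, x) \<in> R"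
  shows "\<exists>xs' ns' l'. ordered_power_form (a \<otimes> w) (Suc n) xs' ns' l' \<and> set xs' \<subseteq> insert a (set xs)"
proof (cases "a = z")
  case True
  then show ?thesis using ordered_power_form_Cons_top[OF form] below by fastforce
next
  case a_not_z: False
  show ?thesis
  proof (cases "a \<in> set xs")
    case False
    then have "\<forall>x\<in>set xs. (a, x) \<in> R \<and> a \<noteq> x" using below by auto
    then show ?thesis using ordered_power_form_Cons_new[OF form a a_not_z] by fastforce
  next
    case True
    obtain x1 xs' k ns' where xs: "xs = x1 # xs'" and ns: "ns = k # ns'"
      using True form by (cases xs; cases ns) (auto simp: ordered_power_form_def)
    have "x1 = a"
    proof (rule ccontr)
      assume "x1 \<noteq> a"
      then have "(x1, a) \<in> R" "(a, x1) \<in> R"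
        using True form below by (auto simp: xs ordered_power_form_def)
      then show False using \<open>x1 \<noteq> a\<close> antisym_R by (auto simp: antisym_def)
    qed
    have "k \<le> m - 1" using form by (simp add: ordered_power_form_def ns)
    then consider "Suc k < m" | "Suc k = m" using m_pos by linarith
    then show ?thesis
    proof cases
      case 1
      then show ?thesis using ordered_power_form_Cons_head form by (fastforce simp: xs ns \<open>x1 = a\<close>)
    next
      case 2
      then show ?thesis using ordered_power_form_Cons_wrap form by (fastforce simp: xs ns \<open>x1 = a\<close>)
    qed
  qed
qed

lemma ordered_power_form_sorted_word:
  "set ws \<subseteq> C \<Longrightarrow> sorted_wrt (\<lambda>a b. (a, b) \<in> R) ws \<Longrightarrow>
    \<exists>xs ns l. ordered_power_form (mprod G ws) (length ws) xs ns l \<and> set xs \<subseteq> set ws"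
proof (induction ws)
  case Nil
  then show ?case using ordered_power_form_Nil by fastforce
next
  case (Cons a ws)
  then obtain xs ns l where "ordered_power_form (mprod G ws) (length ws) xs ns l" "set xs \<subseteq> set ws"
    by auto
  moreover have "a \<in> C" "\<forall>x\<in>set xs. (a, x) \<in> R"
    using Cons.prems \<open>set xs \<subseteq> set ws\<close> by auto
  ultimately show ?case
    using ordered_power_form_Cons by fastforce
qed

end

theorem mainTheorem2:
  fixes G (structure)
    and C :: "'a set" and R :: "'a rel" and z x0 :: 'a and m n :: nat
  assumes "group G"
    and "C \<subseteq> carrier G" and "finite C" and "is_conj_class G C"
    and "generate G C = carrier G"
    and "x0 \<in> C" and "m = conj_action_order G C x0"
    and "linear_order_on C R"
    and "z \<in> C" and "\<forall>x\<in>C. (x, z) \<in> R"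
    and "set ys \<subseteq> C" and "length ys = n"
  shows "\<exists>xs ns l. length ns = length xs \<and> set xs \<subseteq> C
      \<and> sorted_wrt (\<lambda>a b. (a, b) \<in> R \<and> a \<noteq> b) xs
      \<and> (\<forall>x\<in>set xs. (x, z) \<in> R \<and> x \<noteq> z)
      \<and> (\<forall>k\<in>set ns. 1 \<le> k \<and> k \<le> m - 1)
      \<and> sum_list ns + l = n
      \<and> mprod G ys = mprod G (map2 (\<lambda>x k. x [^] k) xs ns @ [z [^] l])"
proof -
  interpret group G by fact
  note pow_m = conj_class_pow_central[OF assms(4,3,2,5,6), folded assms(7)]
  interpret central_top_power G C R z m
  proof
    show "antisym R"
      using assms(8) by (simp add: linear_order_on_def partial_order_on_def)
    show "\<And>x. x \<in> C \<Longrightarrow> x [^] m = z [^] m"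
      using pow_m(3) assms(9) by simp
    show "\<And>g. g \<in> carrier G \<Longrightarrow> z [^] m \<otimes> g = g \<otimes> z [^] m"
      using pow_m(2,3) assms(9) by simp
  qed (use pow_m(1) assms(2,9,10) in auto)
  have "inv b \<otimes> a \<otimes> b \<in> C" if "a \<in> C" "b \<in> C" for a b
    using conj_class_conj_closed[OF assms(4) that(1) inv_closed[of b]] that(2) assms(2) by auto
  then obtain ws where "set ws \<subseteq> C" "length ws = n" "sorted_wrt (\<lambda>a b. (a, b) \<in> R) ws"
      "mprod G ws = mprod G ys"
    using exists_sorted_word[OF assms(3,2,8) _ assms(11)] assms(12) by metis
  then show ?thesis
    using ordered_power_form_sorted_word unfolding ordered_power_form_def by fastforce
qed

end
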